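(* Let $p$ be a prime and $n\ge1$. The map $\pi_2:{\rm Sub}(\mathcal{L}_{n,p})\to{\rm Sub}(\mathcal{A}_{n,p})$, $\pi_2(V)=V\cap\mathcal{A}_{n,p}$, induces by push-forward an affine map $(\pi_2)_*:{\rm IRS}(\mathcal{L}_{n,p})\to{\rm IRS}_\tau(\mathcal{A}_{n,p})$, and the restriction of $(\pi_2)_*$ to ${\rm IRS}_0(\mathcal{L}_{n,p})$ is an isomorphism onto ${\rm IRS}_\tau(\mathcal{A}_{n,p})$.
   Context: $\mathcal{A}_{n,p}=\bigoplus_{\mathbb{Z}}(\mathbb{Z}/p\mathbb{Z})^n$, $\mathcal{L}_{n,p}=\mathcal{A}_{n,p}\rtimes\mathbb{Z}$ with $\mathbb{Z}$ acting by the shift $\tau$, $(\tau\omega)_i=\omega_{i+1}$. ${\rm Sub}(G)$ is the compact space of subgroups of $G$ (topology from $\{0,1\}^G$). ${\rm IRS}(\mathcal{L}_{n,p})$ is the simplex of conjugation-invariant Borel probability measures on ${\rm Sub}(\mathcal{L}_{n,p})$ with the weak$^*$ topology; ${\rm IRS}_0(\mathcal{L}_{n,p})$ consists of those $\mu$ with $\mu(\{V: V\subset\mathcal{A}_{n,p}\})=1$ (equivalently, the projection of $V$ to $\mathbb{Z}$ is trivial $\mu$-a.s.). ${\rm IRS}_\tau(\mathcal{A}_{n,p})$ is the simplex of Borel probability measures on ${\rm Sub}(\mathcal{A}_{n,p})$ invariant under $H\mapsto\tau H$. *)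

theory Defs
  imports "HOL-Probability.Probability" "HOL-Algebra.Group"
begin

text \<open>Elements of A_{n,p}: functions omega :: int => nat => nat, omega i k is the k-th
coordinate (k < n) of the i-th component, a residue in {0..p-1}; finitely supported in i.\<close>

type_synonym aelt = "int \<Rightarrow> nat \<Rightarrow> nat"

definition A_carrier :: "nat \<Rightarrow> nat \<Rightarrow> aelt set" where
  "A_carrier n p = {\<omega>. (\<forall>i k. \<omega> i k < p) \<and> (\<forall>i k. n \<le> k \<longrightarrow> \<omega> i k = 0)
                     \<and> finite {i. \<exists>k. \<omega> i k \<noteq> 0}}"

definition A_add :: "nat \<Rightarrow> aelt \<Rightarrow> aelt \<Rightarrow> aelt" where
  "A_add p \<omega> \<omega>' = (\<lambda>i k. (\<omega> i k + \<omega>' i k) mod p)"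

definition A_zero :: aelt where
  "A_zero = (\<lambda>i k. 0)"

definition A_grp :: "nat \<Rightarrow> nat \<Rightarrow> aelt monoid" where
  "A_grp n p = \<lparr>carrier = A_carrier n p, mult = A_add p, one = A_zero\<rparr>"

definition shift :: "int \<Rightarrow> aelt \<Rightarrow> aelt" where
  "shift m \<omega> = (\<lambda>i. \<omega> (i + m))"

definition L_grp :: "nat \<Rightarrow> nat \<Rightarrow> (aelt \<times> int) monoid" where
  "L_grp n p = \<lparr>carrier = A_carrier n p \<times> UNIV,
                mult = (\<lambda>(a, m) (b, k). (A_add p a (shift m b), m + k)),
                one = (A_zero, 0)\<rparr>"

definition Sub :: "('g, 'b) monoid_scheme \<Rightarrow> 'g set set" where
  "Sub G = {H. subgroup H G}"

text \<open>Topology on Sub(G) induced from {0,1}^G (product topology): generated by the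
cylinder sets {H. g in H} and {H. g notin H}.\<close>
definition SubTop :: "('g, 'b) monoid_scheme \<Rightarrow> 'g set topology" where
  "SubTop G = subtopology
     (topology_generated_by ({{H. g \<in> H} | g. g \<in> carrier G} \<union> {{H. g \<notin> H} | g. g \<in> carrier G}))
     (Sub G)"

definition SubBorel :: "('g, 'b) monoid_scheme \<Rightarrow> 'g set measure" where
  "SubBorel G = sigma (Sub G) {U. openin (SubTop G) U}"

definition conjg :: "('g, 'b) monoid_scheme \<Rightarrow> 'g \<Rightarrow> 'g set \<Rightarrow> 'g set" where
  "conjg G g H = (\<lambda>h. g \<otimes>\<^bsub>G\<^esub> h \<otimes>\<^bsub>G\<^esub> inv\<^bsub>G\<^esub> g) ` H"

definition IRS :: "('g, 'b) monoid_scheme \<Rightarrow> 'g set measure set" where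
  "IRS G = {\<mu>. prob_space \<mu> \<and> sets \<mu> = sets (SubBorel G)
              \<and> (\<forall>g \<in> carrier G. distr \<mu> (SubBorel G) (conjg G g) = \<mu>)}"

definition A_in_L :: "nat \<Rightarrow> nat \<Rightarrow> (aelt \<times> int) set" where
  "A_in_L n p = A_carrier n p \<times> {0}"

definition IRS0 :: "nat \<Rightarrow> nat \<Rightarrow> (aelt \<times> int) set measure set" where
  "IRS0 n p = {\<mu> \<in> IRS (L_grp n p). measure \<mu> {V \<in> Sub (L_grp n p). V \<subseteq> A_in_L n p} = 1}"

definition IRS_tau :: "nat \<Rightarrow> nat \<Rightarrow> aelt set measure set" where
  "IRS_tau n p = {\<mu>. prob_space \<mu> \<and> sets \<mu> = sets (SubBorel (A_grp n p))
              \<and> distr \<mu> (SubBorel (A_grp n p)) (\<lambda>H. shift 1 ` H) = \<mu>}"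

definition pi2 :: "(aelt \<times> int) set \<Rightarrow> aelt set" where
  "pi2 V = {\<omega>. (\<omega>, 0) \<in> V}"

definition pi2_push :: "nat \<Rightarrow> nat \<Rightarrow> (aelt \<times> int) set measure \<Rightarrow> aelt set measure" where
  "pi2_push n p \<mu> = distr \<mu> (SubBorel (A_grp n p)) pi2"

definition mix :: "real \<Rightarrow> 'a measure \<Rightarrow> 'a measure \<Rightarrow> 'a measure" where
  "mix t \<mu> \<nu> = measure_of (space \<mu>) (sets \<mu>)
     (\<lambda>X. ennreal t * emeasure \<mu> X + ennreal (1 - t) * emeasure \<nu> X)"

definition wstar :: "'a topology \<Rightarrow> 'a measure topology" where
  "wstar T = topology_generated_by
     {{\<mu>. (\<integral>x. f x \<partial>\<mu>) \<in> U} | f U. continuous_map T euclideanreal f \<and> open U}"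

end

theory Submission
  imports Defs
begin

text \<open>Conjugating \<open>V \<le> \<L>\<close> by the generator \<open>(0, 1)\<close> of \<open>\<int>\<close> shifts \<open>V \<inter> \<A>\<close> by \<open>\<tau>\<close>,
  so \<open>\<pi>\<^sub>2\<close> pushes invariant random subgroups of \<open>\<L>\<close> to \<open>\<tau>\<close>-invariant ones of \<open>\<A>\<close>;
  push-forward is affine. Conversely, as \<open>\<A>\<close> is abelian, conjugation by \<open>(a, m)\<close> acts on
  \<open>\<A> \<times> {0}\<close> as \<open>\<tau>\<^sup>m\<close>, so \<open>H \<mapsto> H \<times> {0}\<close> pushes \<open>\<tau>\<close>-invariant measures into
  \<open>IRS\<^sub>0\<close>. On \<open>IRS\<^sub>0\<close> the two push-forwards are mutually inverse, and both are weak-*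
  continuous because \<open>V \<mapsto> V \<inter> \<A>\<close> and \<open>H \<mapsto> H \<times> {0}\<close> are continuous for the
  topology of cylinder sets.\<close>

lemma shift_shift: "shift m (shift k \<omega>) = shift (m + k) \<omega>"
  by (simp add: shift_def ac_simps)

lemma shift_0 [simp]: "shift 0 \<omega> = \<omega>"
  by (simp add: shift_def)

lemma shift_A_zero [simp]: "shift m A_zero = A_zero"
  by (simp add: shift_def A_zero_def)

lemma shift_A_add: "shift m (A_add p a b) = A_add p (shift m a) (shift m b)"
  by (simp add: shift_def A_add_def)

lemma mem_shift_image_iff: "g \<in> shift m ` H \<longleftrightarrow> shift (- m) g \<in> H"
proof
  assume "g \<in> shift m ` H"
  then show "shift (- m) g \<in> H"
    by (auto simp: shift_shift)
next
  assume "shift (- m) g \<in> H"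
  moreover have "g = shift m (shift (- m) g)"
    by (simp add: shift_shift)
  ultimately show "g \<in> shift m ` H"
    by (rule rev_image_eqI[of _ _ _ "shift m"])
qed

lemma shift_in_A_carrier:
  assumes "\<omega> \<in> A_carrier n p"
  shows "shift m \<omega> \<in> A_carrier n p"
proof -
  have "{i. \<exists>k. shift m \<omega> i k \<noteq> 0} = (\<lambda>i. i + m) -` {i. \<exists>k. \<omega> i k \<noteq> 0}"
    by (auto simp: shift_def)
  moreover have "finite ((\<lambda>i. i + m) -` {i. \<exists>k. \<omega> i k \<noteq> 0})"
    using assms by (intro finite_vimageI) (auto simp: A_carrier_def inj_on_def)
  ultimately show ?thesis
    using assms by (auto simp: A_carrier_def shift_def)
qed

lemma A_carrier_if_support_subset:
  assumes "a \<in> A_carrier n p" "b \<in> A_carrier n p" "\<And>i k. f i k < p"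
    and "\<And>i k. a i k = 0 \<Longrightarrow> b i k = 0 \<Longrightarrow> f i k = 0"
  shows "f \<in> A_carrier n p"
proof -
  have "{i. \<exists>k. f i k \<noteq> 0} \<subseteq> {i. \<exists>k. a i k \<noteq> 0} \<union> {i. \<exists>k. b i k \<noteq> 0}"
  proof
    fix i assume "i \<in> {i. \<exists>k. f i k \<noteq> 0}"
    then obtain k where "f i k \<noteq> 0"
      by blast
    then have "a i k \<noteq> 0 \<or> b i k \<noteq> 0"
      using assms(4) by metis
    then show "i \<in> {i. \<exists>k. a i k \<noteq> 0} \<union> {i. \<exists>k. b i k \<noteq> 0}"
      by blast
  qed
  moreover have "finite ({i. \<exists>k. a i k \<noteq> 0} \<union> {i. \<exists>k. b i k \<noteq> 0})"
    using assms(1,2) by (simp add: A_carrier_def)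
  ultimately have "finite {i. \<exists>k. f i k \<noteq> 0}"
    by (rule finite_subset)
  moreover have "f i k = 0" if "n \<le> k" for i k
    using assms(1,2,4) that by (simp add: A_carrier_def)
  ultimately show ?thesis
    using assms(3) by (simp add: A_carrier_def)
qed

lemma A_add_commute: "A_add p a b = A_add p b a"
  by (simp add: A_add_def add.commute)

lemma A_zero_in_A_carrier: "p > 0 \<Longrightarrow> A_zero \<in> A_carrier n p"
  by (simp add: A_carrier_def A_zero_def)

definition A_neg :: "nat \<Rightarrow> aelt \<Rightarrow> aelt" where
  "A_neg p a = (\<lambda>i k. (p - a i k) mod p)"

lemma A_grp_is_comm_group:
  assumes p: "p > 0"
  shows "comm_group (A_grp n p)"
proof -
  have neg: "A_neg p a \<in> A_carrier n p \<and> A_add p (A_neg p a) a = A_zero"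
    if a: "a \<in> A_carrier n p" for a
  proof
    show "A_neg p a \<in> A_carrier n p"
      by (rule A_carrier_if_support_subset[OF a a]) (simp_all add: A_neg_def p)
    have "((p - x) mod p + x) mod p = 0" if "x < p" for x
      using that by (cases "x = 0") simp_all
    then show "A_add p (A_neg p a) a = A_zero"
      using a by (simp add: A_add_def A_neg_def A_zero_def A_carrier_def)
  qed
  have add: "A_add p a b \<in> A_carrier n p" if "a \<in> A_carrier n p" "b \<in> A_carrier n p" for a b
    by (rule A_carrier_if_support_subset[OF that]) (simp_all add: A_add_def p)
  have zero: "A_zero \<in> A_carrier n p"
    by (rule A_zero_in_A_carrier[OF p])
  have zero_add: "A_add p A_zero a = a" if "a \<in> A_carrier n p" for a
    using that by (auto simp: A_add_def A_zero_def A_carrier_def)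
  have assoc: "A_add p (A_add p a b) c = A_add p a (A_add p b c)" for a b c
    by (simp add: A_add_def mod_add_left_eq mod_add_right_eq add.assoc)
  have "group (A_grp n p)"
  proof (rule groupI)
    fix x assume "x \<in> carrier (A_grp n p)"
    then show "\<exists>y\<in>carrier (A_grp n p). y \<otimes>\<^bsub>A_grp n p\<^esub> x = \<one>\<^bsub>A_grp n p\<^esub>"
      using neg[of x] by (auto simp: A_grp_def)
  qed (use add zero zero_add assoc in \<open>auto simp: A_grp_def\<close>)
  then show ?thesis
    by (rule group.group_comm_groupI) (simp add: A_grp_def A_add_commute)
qed

lemma L_grp_is_group:
  assumes p: "p > 0"
  shows "group (L_grp n p)"
proof -
  interpret A: comm_group "A_grp n p"
    by (rule A_grp_is_comm_group[OF p])
  have add: "A_add p a b \<in> A_carrier n p" if "a \<in> A_carrier n p" "b \<in> A_carrier n p" for a b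
    using A.m_closed that by (simp add: A_grp_def)
  have zero: "A_add p A_zero a = a" "A_add p a A_zero = a" if "a \<in> A_carrier n p" for a
    using A.l_one A.r_one that by (simp_all add: A_grp_def)
  have assoc: "A_add p (A_add p a b) c = A_add p a (A_add p b c)" for a b c
    by (simp add: A_add_def mod_add_left_eq mod_add_right_eq add.assoc)
  show ?thesis
  proof (rule groupI)
    fix x assume x: "x \<in> carrier (L_grp n p)"
    obtain a m where am: "x = (a, m)" and a: "a \<in> carrier (A_grp n p)"
      using x by (auto simp: L_grp_def A_grp_def)
    have "inv\<^bsub>A_grp n p\<^esub> a \<in> A_carrier n p"
      using A.inv_closed[OF a] by (simp add: A_grp_def)
    then have "shift (- m) (inv\<^bsub>A_grp n p\<^esub> a) \<in> A_carrier n p"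
      by (rule shift_in_A_carrier)
    moreover have "A_add p (shift (- m) (inv\<^bsub>A_grp n p\<^esub> a)) (shift (- m) a) = A_zero"
      using A.l_inv[OF a] by (simp add: A_grp_def flip: shift_A_add)
    ultimately show "\<exists>y\<in>carrier (L_grp n p). y \<otimes>\<^bsub>L_grp n p\<^esub> x = \<one>\<^bsub>L_grp n p\<^esub>"
      using am by (intro bexI[of _ "(shift (- m) (inv\<^bsub>A_grp n p\<^esub> a), - m)"])
        (auto simp: L_grp_def shift_shift)
  qed (auto simp: L_grp_def add shift_in_A_carrier zero assoc shift_A_add shift_shift add.assoc
      A_zero_in_A_carrier[OF p])
qed

definition A_incl :: "aelt \<Rightarrow> aelt \<times> int" where
  "A_incl a = (a, 0)"

lemma A_incl_hom:
  assumes "p > 0"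
  shows "group_hom (A_grp n p) (L_grp n p) A_incl"
proof -
  have "A_incl \<in> hom (A_grp n p) (L_grp n p)"
    by (rule homI) (simp_all add: A_incl_def A_grp_def L_grp_def)
  then show ?thesis
    using A_grp_is_comm_group[OF assms] L_grp_is_group[OF assms]
    by (simp add: group_hom_def group_hom_axioms_def comm_group.axioms(2))
qed

lemma pi2_eq_vimage_A_incl:
  "V \<subseteq> carrier (L_grp n p) \<Longrightarrow> pi2 V = {a \<in> carrier (A_grp n p). A_incl a \<in> V}"
  by (auto simp: pi2_def A_incl_def L_grp_def A_grp_def)

lemma pi2_image_A_incl [simp]: "pi2 (A_incl ` H) = H"
  by (auto simp: pi2_def A_incl_def)

lemma image_A_incl_pi2:
  "V \<subseteq> A_in_L n p \<Longrightarrow> A_incl ` pi2 V = V"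
  by (auto simp: pi2_def A_incl_def A_in_L_def image_iff)

lemma (in group_hom) subgroup_vimage:
  assumes "subgroup I H"
  shows "subgroup {x \<in> carrier G. h x \<in> I} G"
  using assms by (intro G.subgroupI) (auto simp: subgroup_def)

lemma (in group) inv_mult_cancel_left [simp]:
  "g \<in> carrier G \<Longrightarrow> x \<in> carrier G \<Longrightarrow> inv g \<otimes> (g \<otimes> x) = x"
  by (simp add: m_assoc[symmetric])

lemma (in group) mult_inv_cancel_left [simp]:
  "g \<in> carrier G \<Longrightarrow> x \<in> carrier G \<Longrightarrow> g \<otimes> (inv g \<otimes> x) = x"
  by (simp add: m_assoc[symmetric])

lemma (in group) conjg_subgroup:
  assumes "g \<in> carrier G" "subgroup H G"
  shows "subgroup (conjg G g H) G"
proof -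
  have "group_hom G G (\<lambda>h. g \<otimes> h \<otimes> inv g)"
    using assms(1) by unfold_locales (auto intro!: homI simp: m_assoc)
  then show ?thesis
    unfolding conjg_def using assms(2) by (rule group_hom.subgroup_img_is_subgroup)
qed

lemma (in group) mem_conjg_iff:
  assumes "g \<in> carrier G" "H \<subseteq> carrier G" "x \<in> carrier G"
  shows "x \<in> conjg G g H \<longleftrightarrow> inv g \<otimes> x \<otimes> g \<in> H"
proof
  assume "x \<in> conjg G g H"
  then obtain h where "h \<in> H" "x = g \<otimes> h \<otimes> inv g"
    by (auto simp: conjg_def)
  with assms show "inv g \<otimes> x \<otimes> g \<in> H"
    by (auto simp: m_assoc subsetD)
next
  assume "inv g \<otimes> x \<otimes> g \<in> H"
  moreover have "x = g \<otimes> (inv g \<otimes> x \<otimes> g) \<otimes> inv g"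
    using assms by (simp add: m_assoc)
  ultimately show "x \<in> conjg G g H"
    unfolding conjg_def by blast
qed

lemma (in group) conjg_eq_image:
  assumes "g \<in> carrier G" "H \<subseteq> carrier G" "f ` H \<subseteq> carrier G"
    and "\<And>h. h \<in> H \<Longrightarrow> g \<otimes> h = f h \<otimes> g"
  shows "conjg G g H = f ` H"
  unfolding conjg_def
proof (rule image_cong[OF refl])
  fix h assume "h \<in> H"
  with assms show "g \<otimes> h \<otimes> inv g = f h"
    by (auto simp: m_assoc subsetD)
qed

lemma pi2_conjg_generator:
  assumes "p > 0" "V \<subseteq> carrier (L_grp n p)"
  shows "pi2 (conjg (L_grp n p) (A_zero, 1) V) = shift 1 ` pi2 V"
proof -
  interpret L: group "L_grp n p"
    by (rule L_grp_is_group[OF assms(1)])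
  have "conjg (L_grp n p) (A_zero, 1) V = (\<lambda>(b, k). (shift 1 b, k)) ` V"
    using assms by (intro L.conjg_eq_image)
      (auto simp: L_grp_def shift_in_A_carrier A_zero_in_A_carrier A_add_commute)
  then show ?thesis
    by (force simp: pi2_def)
qed

text \<open>Since \<open>\<A>\<close> is abelian, \<open>(a, m) (h, 0) = (\<tau>\<^sup>m h, 0) (a, m)\<close>.\<close>

lemma conjg_image_A_incl:
  assumes "p > 0" "(a, m) \<in> carrier (L_grp n p)" "H \<subseteq> A_carrier n p"
  shows "conjg (L_grp n p) (a, m) (A_incl ` H) = A_incl ` shift m ` H"
proof -
  interpret L: group "L_grp n p"
    by (rule L_grp_is_group[OF assms(1)])
  have "conjg (L_grp n p) (a, m) (A_incl ` H) = (\<lambda>x. A_incl (shift m (fst x))) ` A_incl ` H"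
    using assms by (intro L.conjg_eq_image)
      (auto simp: A_incl_def L_grp_def shift_in_A_carrier A_add_commute)
  then show ?thesis
    by (simp add: image_image A_incl_def)
qed

section \<open>The topology on the space of subgroups\<close>

lemma Sub_subset_Union_cylinders:
  "Sub G \<subseteq> \<Union> ({{H. g \<in> H} | g. g \<in> carrier G} \<union> {{H. g \<notin> H} | g. g \<in> carrier G})"
proof
  fix H assume "H \<in> Sub G"
  then have "H \<in> {H. \<one>\<^bsub>G\<^esub> \<in> H}" "\<one>\<^bsub>G\<^esub> \<in> carrier G"
    using subgroup.one_closed subgroup.subset by (fastforce simp: Sub_def)+
  then show "H \<in> \<Union> ({{H. g \<in> H} | g. g \<in> carrier G} \<union> {{H. g \<notin> H} | g. g \<in> carrier G})"
    by blast
qed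

lemma topspace_SubTop [simp]: "topspace (SubTop G) = Sub G"
  unfolding SubTop_def using Sub_subset_Union_cylinders by auto

lemma openin_SubTop_mem: "g \<in> carrier G \<Longrightarrow> openin (SubTop G) {H \<in> Sub G. g \<in> H}"
  unfolding SubTop_def openin_subtopology
  by (rule exI[of _ "{H. g \<in> H}"]) (auto intro: topology_generated_by_Basis)

lemma openin_SubTop_not_mem: "g \<in> carrier G \<Longrightarrow> openin (SubTop G) {H \<in> Sub G. g \<notin> H}"
  unfolding SubTop_def openin_subtopology
  by (rule exI[of _ "{H. g \<notin> H}"]) (auto intro: topology_generated_by_Basis)

text \<open>The hypothesis makes the preimage of every subbasic cylinder a cylinder or trivial.\<close>

lemma continuous_map_SubTop:
  assumes "F ` Sub G \<subseteq> Sub G'"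
    and "\<And>g. g \<in> carrier G' \<Longrightarrow>
      (\<exists>h\<in>carrier G. \<forall>H\<in>Sub G. g \<in> F H \<longleftrightarrow> h \<in> H) \<or> (\<exists>b. \<forall>H\<in>Sub G. g \<in> F H \<longleftrightarrow> b)"
  shows "continuous_map (SubTop G) (SubTop G') F"
proof -
  have cyl: "openin (SubTop G) {H \<in> Sub G. g \<in> F H} \<and> openin (SubTop G) {H \<in> Sub G. g \<notin> F H}"
    if "g \<in> carrier G'" for g
    using assms(2)[OF that]
  proof
    assume "\<exists>h\<in>carrier G. \<forall>H\<in>Sub G. g \<in> F H \<longleftrightarrow> h \<in> H"
    then obtain h where "h \<in> carrier G" "\<And>H. H \<in> Sub G \<Longrightarrow> g \<in> F H \<longleftrightarrow> h \<in> H"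
      by blast
    then show ?thesis
      using openin_SubTop_mem[of h G] openin_SubTop_not_mem[of h G]
      by (simp cong: conj_cong)
  next
    assume "\<exists>b. \<forall>H\<in>Sub G. g \<in> F H \<longleftrightarrow> b"
    then obtain b where "\<And>H. H \<in> Sub G \<Longrightarrow> g \<in> F H \<longleftrightarrow> b"
      by blast
    then show ?thesis
      using openin_topspace[of "SubTop G"] by (cases b) (simp_all cong: conj_cong)
  qed
  show ?thesis
    unfolding SubTop_def[of G'] continuous_map_in_subtopology continuous_on_generated_topo_iff
  proof (intro conjI allI impI)
    fix U assume "U \<in> {{H. g \<in> H} |g. g \<in> carrier G'} \<union> {{H. g \<notin> H} |g. g \<in> carrier G'}"
    then show "openin (SubTop G) (F -` U \<inter> topspace (SubTop G))"
      using cyl by (auto simp: vimage_def Int_def conj_commute)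
  next
    show "F ` topspace (SubTop G)
        \<subseteq> \<Union> ({{H. g \<in> H} |g. g \<in> carrier G'} \<union> {{H. g \<notin> H} |g. g \<in> carrier G'})"
      using assms(1) Sub_subset_Union_cylinders[of G'] by auto
  qed (use assms(1) in auto)
qed

lemma Sub_subset_SubTop: "{U. openin (SubTop G) U} \<subseteq> Pow (Sub G)"
  using openin_subset by fastforce

lemma space_SubBorel [simp]: "space (SubBorel G) = Sub G"
  unfolding SubBorel_def using Sub_subset_SubTop by (rule space_measure_of)

lemma sets_SubBorel_openin: "openin (SubTop G) U \<Longrightarrow> U \<in> sets (SubBorel G)"
  unfolding SubBorel_def using Sub_subset_SubTop by (auto simp: sets_measure_of)

lemma measurable_SubBorel:
  assumes "continuous_map (SubTop G) (SubTop G') F"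
  shows "F \<in> measurable (SubBorel G) (SubBorel G')"
  unfolding SubBorel_def[of G']
proof (rule measurable_measure_of[OF Sub_subset_SubTop])
  show "F \<in> space (SubBorel G) \<rightarrow> Sub G'"
    using continuous_map_image_subset_topspace[OF assms] by auto
  fix U assume "U \<in> {U. openin (SubTop G') U}"
  then have "openin (SubTop G) {H \<in> topspace (SubTop G). F H \<in> U}"
    using assms openin_continuous_map_preimage by blast
  then show "F -` U \<inter> space (SubBorel G) \<in> sets (SubBorel G)"
    by (auto dest: sets_SubBorel_openin simp: vimage_def Int_def conj_commute)
qed

lemma borel_measurable_SubBorel:
  assumes "continuous_map (SubTop G) euclideanreal f"
  shows "f \<in> borel_measurable (SubBorel G)"
proof (rule borel_measurableI)
  fix S :: "real set" assume "open S"
  then have "openin (SubTop G) {H \<in> topspace (SubTop G). f H \<in> S}"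
    using openin_continuous_map_preimage[OF assms] \<open>open S\<close> by simp
  then show "f -` S \<inter> space (SubBorel G) \<in> sets (SubBorel G)"
    by (auto dest: sets_SubBorel_openin simp: vimage_def Int_def conj_commute)
qed

lemma sets_SubBorel_subgroups_within:
  "{V \<in> Sub G. V \<subseteq> K} \<in> sets (SubBorel G)"
proof -
  let ?U = "\<Union>g \<in> carrier G - K. {V \<in> Sub G. g \<in> V}"
  have "openin (SubTop G) ?U"
    by (intro openin_Union) (auto intro: openin_SubTop_mem)
  then have "Sub G - ?U \<in> sets (SubBorel G)"
    using sets.compl_sets[OF sets_SubBorel_openin] by (metis space_SubBorel)
  moreover have "Sub G - ?U = {V \<in> Sub G. V \<subseteq> K}"
  proof -
    have "V \<subseteq> carrier G" if "V \<in> Sub G" for V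
      using that by (simp add: Sub_def subgroup.subset)
    then show ?thesis
      by auto
  qed
  ultimately show ?thesis
    by simp
qed

lemma (in group) continuous_map_conjg:
  assumes "g \<in> carrier G"
  shows "continuous_map (SubTop G) (SubTop G) (conjg G g)"
proof (rule continuous_map_SubTop, goal_cases)
  case 1
  show ?case
    using conjg_subgroup[OF assms] by (auto simp: Sub_def)
next
  case (2 x)
  have "x \<in> conjg G g H \<longleftrightarrow> inv g \<otimes> x \<otimes> g \<in> H" if "H \<in> Sub G" for H
    using mem_conjg_iff[OF assms _ 2] that by (simp add: Sub_def subgroup.subset)
  moreover have "inv g \<otimes> x \<otimes> g \<in> carrier G"
    using assms 2 by simp
  ultimately show ?case
    by blast
qed

lemma measurable_cong_sets_left:
  "sets M = sets M' \<Longrightarrow> f \<in> measurable M' N \<Longrightarrow> f \<in> measurable M N"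
  using measurable_cong_sets[of M M' N N] by simp

lemma
  assumes "sets \<nu> = sets \<mu>"
  shows sets_mix [simp]: "sets (mix t \<mu> \<nu>) = sets \<mu>"
    and space_mix [simp]: "space (mix t \<mu> \<nu>) = space \<mu>"
    and emeasure_mix: "X \<in> sets \<mu> \<Longrightarrow>
      emeasure (mix t \<mu> \<nu>) X = ennreal t * emeasure \<mu> X + ennreal (1 - t) * emeasure \<nu> X"
proof -
  have sub: "sets \<mu> \<subseteq> Pow (space \<mu>)"
    by (rule sets.space_closed)
  show "sets (mix t \<mu> \<nu>) = sets \<mu>" "space (mix t \<mu> \<nu>) = space \<mu>"
    unfolding mix_def by (simp_all add: sets_measure_of[OF sub] space_measure_of[OF sub])
  assume X: "X \<in> sets \<mu>"
  have "countably_additive (sets \<mu>) (\<lambda>X. ennreal t * emeasure \<mu> X + ennreal (1 - t) * emeasure \<nu> X)"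
  proof (rule countably_additiveI)
    fix A :: "nat \<Rightarrow> _" assume A: "range A \<subseteq> sets \<mu>" "disjoint_family A"
    then have "range A \<subseteq> sets \<nu>"
      using assms by simp
    then show "(\<Sum>i. ennreal t * emeasure \<mu> (A i) + ennreal (1 - t) * emeasure \<nu> (A i))
        = ennreal t * emeasure \<mu> (\<Union> (range A)) + ennreal (1 - t) * emeasure \<nu> (\<Union> (range A))"
      using A by (simp add: suminf_add[symmetric] summableI suminf_emeasure ennreal_suminf_cmult[symmetric])
  qed
  then show "emeasure (mix t \<mu> \<nu>) X = ennreal t * emeasure \<mu> X + ennreal (1 - t) * emeasure \<nu> X"
    unfolding mix_def
    by (intro emeasure_measure_of_sigma[OF sets.sigma_algebra_axioms _ _ X]) (simp_all add: positive_def)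
qed

lemma distr_mix:
  assumes "sets \<nu> = sets \<mu>" "f \<in> measurable \<mu> N"
  shows "distr (mix t \<mu> \<nu>) N f = mix t (distr \<mu> N f) (distr \<nu> N f)"
proof (rule measure_eqI)
  note f\<nu> = measurable_cong_sets_left[OF assms]
  note fmix = measurable_cong_sets_left[OF sets_mix[OF assms(1)] assms(2)]
  show "sets (distr (mix t \<mu> \<nu>) N f) = sets (mix t (distr \<mu> N f) (distr \<nu> N f))"
    by simp
  fix X assume "X \<in> sets (distr (mix t \<mu> \<nu>) N f)"
  then have X: "X \<in> sets N"
    by simp
  have "f -` X \<inter> space \<nu> = f -` X \<inter> space \<mu>"
    using sets_eq_imp_space_eq[OF assms(1)] by simp
  then show "emeasure (distr (mix t \<mu> \<nu>) N f) X = emeasure (mix t (distr \<mu> N f) (distr \<nu> N f)) X"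
    using assms X measurable_sets[OF assms(2) X]
    by (simp add: emeasure_distr[OF fmix X] emeasure_distr[OF assms(2) X] emeasure_distr[OF f\<nu> X]
        emeasure_mix)
qed

lemma distr_invariant_intertwine:
  assumes "sets \<mu> = sets M" "\<alpha> \<in> measurable M M" "\<phi> \<in> measurable M N" "\<beta> \<in> measurable N N"
    and "distr \<mu> M \<alpha> = \<mu>" and "\<And>x. x \<in> space M \<Longrightarrow> \<phi> (\<alpha> x) = \<beta> (\<phi> x)"
  shows "distr (distr \<mu> N \<phi>) N \<beta> = distr \<mu> N \<phi>"
proof -
  have "distr (distr \<mu> N \<phi>) N \<beta> = distr \<mu> N (\<beta> \<circ> \<phi>)"
    by (rule distr_distr[OF assms(4) measurable_cong_sets_left[OF assms(1,3)]])
  also have "\<dots> = distr \<mu> N (\<phi> \<circ> \<alpha>)"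
    using assms(6) sets_eq_imp_space_eq[OF assms(1)] by (intro distr_cong) auto
  also have "\<dots> = distr (distr \<mu> M \<alpha>) N \<phi>"
    by (rule distr_distr[OF assms(3) measurable_cong_sets_left[OF assms(1,2)], symmetric])
  finally show ?thesis
    using assms(5) by simp
qed

lemma distr_invariant_comp:
  assumes "sets \<nu> = sets M" "f \<in> measurable M M" "g \<in> measurable M M"
    and "distr \<nu> M f = \<nu>" "distr \<nu> M g = \<nu>"
  shows "distr \<nu> M (g \<circ> f) = \<nu>"
proof -
  have "distr \<nu> M (g \<circ> f) = distr (distr \<nu> M f) M g"
    by (rule distr_distr[OF assms(3) measurable_cong_sets_left[OF assms(1,2)], symmetric])
  then show ?thesis
    using assms(4,5) by simp
qed

lemma distr_inverse_eq:
  assumes "sets \<mu> = sets M" "\<phi> \<in> measurable \<mu> N" "\<psi> \<in> measurable N M"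
    and "AE x in \<mu>. \<psi> (\<phi> x) = x"
  shows "distr (distr \<mu> N \<phi>) M \<psi> = \<mu>"
proof -
  have "distr (distr \<mu> N \<phi>) M \<psi> = distr \<mu> M (\<psi> \<circ> \<phi>)"
    by (rule distr_distr[OF assms(3,2)])
  also have "\<dots> = distr \<mu> M (\<lambda>x. x)"
    using assms(4) measurable_comp[OF assms(2,3)] measurable_ident_sets[OF assms(1)]
    by (intro distr_cong_AE) simp_all
  also have "\<dots> = \<mu>"
    using assms(1) by (simp add: distr_id2)
  finally show ?thesis .
qed

lemma topspace_wstar [simp]: "topspace (wstar T) = UNIV"
proof -
  have "UNIV \<in> {{\<mu>. (\<integral>x. f x \<partial>\<mu>) \<in> U} | f U. continuous_map T euclideanreal f \<and> open U}"
    by (intro CollectI exI[of _ "\<lambda>_. 0"] exI[of _ UNIV]) simp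
  then show ?thesis
    unfolding wstar_def topology_generated_by_topspace by blast
qed

text \<open>\<open>\<integral>f d(\<phi>\<^sub>*\<mu>) = \<integral>(f \<circ> \<phi>) d\<mu>\<close>, and \<open>f \<circ> \<phi>\<close> is again continuous.\<close>

lemma continuous_map_wstar_distr:
  assumes "continuous_map T T' \<phi>" "\<phi> \<in> measurable M M'"
    and "\<And>f. continuous_map T' euclideanreal f \<Longrightarrow> f \<in> borel_measurable M'"
    and "\<And>\<mu>. \<mu> \<in> S \<Longrightarrow> sets \<mu> = sets M" and "(\<lambda>\<mu>. distr \<mu> M' \<phi>) ` S \<subseteq> S'"
  shows "continuous_map (subtopology (wstar T) S) (subtopology (wstar T') S') (\<lambda>\<mu>. distr \<mu> M' \<phi>)"
  unfolding continuous_map_in_subtopology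
proof (intro conjI)
  show "(\<lambda>\<mu>. distr \<mu> M' \<phi>) \<in> topspace (subtopology (wstar T) S) \<rightarrow> S'"
    using assms(5) by auto
  show "continuous_map (subtopology (wstar T) S) (wstar T') (\<lambda>\<mu>. distr \<mu> M' \<phi>)"
    unfolding wstar_def[of T'] continuous_on_generated_topo_iff
  proof (intro conjI allI impI)
    fix U assume "U \<in> {{\<mu>. (\<integral>x. f x \<partial>\<mu>) \<in> V} | f V. continuous_map T' euclideanreal f \<and> open V}"
    then obtain f V where U: "U = {\<mu>. (\<integral>x. f x \<partial>\<mu>) \<in> V}"
      and f: "continuous_map T' euclideanreal f" and V: "open V"
      by blast
    have "openin (wstar T) {\<mu>. (\<integral>x. (f \<circ> \<phi>) x \<partial>\<mu>) \<in> V}"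
      unfolding wstar_def using continuous_map_compose[OF assms(1) f] V
      by (intro topology_generated_by_Basis) blast
    moreover have "(\<integral>x. f x \<partial>distr \<mu> M' \<phi>) = (\<integral>x. (f \<circ> \<phi>) x \<partial>\<mu>)" if "\<mu> \<in> S" for \<mu>
    proof -
      have "\<phi> \<in> measurable \<mu> M'"
        by (rule measurable_cong_sets_left[OF assms(4)[OF that] assms(2)])
      then show ?thesis
        using integral_distr[OF _ assms(3)[OF f]] by (simp add: comp_def)
    qed
    ultimately show "openin (subtopology (wstar T) S)
        ((\<lambda>\<mu>. distr \<mu> M' \<phi>) -` U \<inter> topspace (subtopology (wstar T) S))"
      unfolding openin_subtopology U by (intro exI[of _ "{\<mu>. (\<integral>x. (f \<circ> \<phi>) x \<partial>\<mu>) \<in> V}"]) auto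
  qed (use topspace_wstar[of T'] in \<open>simp add: wstar_def\<close>)
qed

abbreviation shift_sub :: "int \<Rightarrow> aelt set \<Rightarrow> aelt set" where
  "shift_sub m H \<equiv> shift m ` H"

context
  fixes n p :: nat
  assumes p: "p > 0"
begin

lemma continuous_map_pi2: "continuous_map (SubTop (L_grp n p)) (SubTop (A_grp n p)) pi2"
proof (rule continuous_map_SubTop, goal_cases)
  case 1
  interpret group_hom "A_grp n p" "L_grp n p" A_incl
    by (rule A_incl_hom[OF p])
  have "pi2 V \<in> Sub (A_grp n p)" if "V \<in> Sub (L_grp n p)" for V
  proof -
    have "V \<subseteq> carrier (L_grp n p)"
      using that by (simp add: Sub_def subgroup.subset)
    then show ?thesis
      using subgroup_vimage[of V] that by (simp add: Sub_def pi2_eq_vimage_A_incl)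
  qed
  then show ?case
    by blast
next
  case (2 a)
  then have "A_incl a \<in> carrier (L_grp n p)" "\<forall>V. a \<in> pi2 V \<longleftrightarrow> A_incl a \<in> V"
    by (simp_all add: pi2_def A_incl_def A_grp_def L_grp_def)
  then show ?case
    by blast
qed

lemma continuous_map_image_A_incl:
  "continuous_map (SubTop (A_grp n p)) (SubTop (L_grp n p)) (image A_incl)"
proof (rule continuous_map_SubTop, goal_cases)
  case 1
  interpret group_hom "A_grp n p" "L_grp n p" A_incl
    by (rule A_incl_hom[OF p])
  show ?case
    using subgroup_img_is_subgroup by (auto simp: Sub_def)
next
  case (2 g)
  then obtain a m where g: "g = (a, m)" "a \<in> carrier (A_grp n p)"
    by (auto simp: L_grp_def A_grp_def)
  have mem: "g \<in> A_incl ` H \<longleftrightarrow> a \<in> H \<and> m = 0" for H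
    by (auto simp: g A_incl_def)
  show ?case
  proof (cases "m = 0")
    case True
    then show ?thesis
      using g(2) mem by (intro disjI1 bexI[of _ a]) simp_all
  next
    case False
    then show ?thesis
      using mem by (intro disjI2 exI[of _ False]) simp
  qed
qed

lemma continuous_map_shift_sub:
  "continuous_map (SubTop (A_grp n p)) (SubTop (A_grp n p)) (shift_sub m)"
proof (rule continuous_map_SubTop, goal_cases)
  case 1
  have "shift m \<in> hom (A_grp n p) (A_grp n p)"
    by (rule homI) (simp_all add: A_grp_def shift_in_A_carrier shift_A_add)
  then have "group_hom (A_grp n p) (A_grp n p) (shift m)"
    using A_grp_is_comm_group[OF p]
    by (simp add: group_hom_def group_hom_axioms_def comm_group.axioms(2))
  then show ?case
    using group_hom.subgroup_img_is_subgroup by (fastforce simp: Sub_def)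
next
  case (2 g)
  then have "shift (- m) g \<in> carrier (A_grp n p)"
    by (simp add: A_grp_def shift_in_A_carrier)
  then show ?case
    by (intro disjI1 bexI[of _ "shift (- m) g"]) (simp_all add: mem_shift_image_iff)
qed

lemma measurable_pi2: "pi2 \<in> measurable (SubBorel (L_grp n p)) (SubBorel (A_grp n p))"
  by (rule measurable_SubBorel[OF continuous_map_pi2])

lemma measurable_image_A_incl:
  "image A_incl \<in> measurable (SubBorel (A_grp n p)) (SubBorel (L_grp n p))"
  by (rule measurable_SubBorel[OF continuous_map_image_A_incl])

lemma measurable_shift_sub: "shift_sub m \<in> measurable (SubBorel (A_grp n p)) (SubBorel (A_grp n p))"
  by (rule measurable_SubBorel[OF continuous_map_shift_sub])

lemma measurable_conjg_L:
  "g \<in> carrier (L_grp n p) \<Longrightarrow> conjg (L_grp n p) g \<in> measurable (SubBorel (L_grp n p)) (SubBorel (L_grp n p))"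
  by (rule measurable_SubBorel[OF group.continuous_map_conjg[OF L_grp_is_group[OF p]]])

section \<open>Invariant random subgroups\<close>

lemma pi2_push_IRS:
  assumes "\<mu> \<in> IRS (L_grp n p)"
  shows "pi2_push n p \<mu> \<in> IRS_tau n p"
proof -
  have sets: "sets \<mu> = sets (SubBorel (L_grp n p))" and "prob_space \<mu>"
    using assms by (auto simp: IRS_def)
  have g: "(A_zero, 1) \<in> carrier (L_grp n p)"
    by (simp add: L_grp_def A_zero_in_A_carrier p)
  have "prob_space (pi2_push n p \<mu>)"
    unfolding pi2_push_def using \<open>prob_space \<mu>\<close>
    by (rule prob_space.prob_space_distr[OF _ measurable_cong_sets_left[OF sets measurable_pi2]])
  moreover have "distr (pi2_push n p \<mu>) (SubBorel (A_grp n p)) (shift_sub 1) = pi2_push n p \<mu>"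
    unfolding pi2_push_def
  proof (rule distr_invariant_intertwine[OF sets measurable_conjg_L[OF g] measurable_pi2 measurable_shift_sub])
    show "distr \<mu> (SubBorel (L_grp n p)) (conjg (L_grp n p) (A_zero, 1)) = \<mu>"
      using assms g by (simp add: IRS_def)
    fix V assume "V \<in> space (SubBorel (L_grp n p))"
    then have "V \<subseteq> carrier (L_grp n p)"
      by (simp add: Sub_def subgroup.subset)
    then show "pi2 (conjg (L_grp n p) (A_zero, 1) V) = shift_sub 1 (pi2 V)"
      by (rule pi2_conjg_generator[OF p])
  qed
  ultimately show ?thesis
    by (simp add: IRS_tau_def pi2_push_def)
qed

lemma pi2_push_mix:
  assumes "\<mu> \<in> IRS (L_grp n p)" "\<nu> \<in> IRS (L_grp n p)"
  shows "pi2_push n p (mix t \<mu> \<nu>) = mix t (pi2_push n p \<mu>) (pi2_push n p \<nu>)"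
proof -
  have "sets \<mu> = sets (SubBorel (L_grp n p))" "sets \<nu> = sets (SubBorel (L_grp n p))"
    using assms by (simp_all add: IRS_def)
  then show ?thesis
    unfolding pi2_push_def
    by (intro distr_mix measurable_cong_sets_left[OF _ measurable_pi2]) simp_all
qed

lemma distr_shift_sub_IRS_tau:
  assumes "\<nu> \<in> IRS_tau n p"
  shows "distr \<nu> (SubBorel (A_grp n p)) (shift_sub m) = \<nu>"
proof -
  have sets: "sets \<nu> = sets (SubBorel (A_grp n p))"
    and shift1: "distr \<nu> (SubBorel (A_grp n p)) (shift_sub 1) = \<nu>"
    using assms by (simp_all add: IRS_tau_def)
  note comp = distr_invariant_comp[OF sets measurable_shift_sub measurable_shift_sub]
  show ?thesis
  proof (induction m rule: int_induct[where k = 0])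
    case base
    have "shift_sub 0 = (\<lambda>H. H)"
      by simp
    then show ?case
      using sets by (simp add: distr_id2)
  next
    case (step1 i)
    have "shift_sub (i + 1) = shift_sub 1 \<circ> shift_sub i"
      by (auto simp: image_image shift_shift add.commute)
    then show ?case
      using comp[OF step1(2) shift1] by (simp only:)
  next
    case (step2 i)
    have "shift_sub i = shift_sub (i - 1) \<circ> shift_sub 1"
      by (auto simp: image_image shift_shift)
    then have "distr \<nu> (SubBorel (A_grp n p)) (shift_sub (i - 1) \<circ> shift_sub 1) = \<nu>"
      using step2(2) by (simp only:)
    then have "distr (distr \<nu> (SubBorel (A_grp n p)) (shift_sub 1)) (SubBorel (A_grp n p))
        (shift_sub (i - 1)) = \<nu>"
      by (simp only: distr_distr[OF measurable_shift_sub measurable_cong_sets_left[OF sets measurable_shift_sub]])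
    then show ?case
      by (simp only: shift1)
  qed
qed

definition lift_push :: "aelt set measure \<Rightarrow> (aelt \<times> int) set measure" where
  "lift_push \<nu> = distr \<nu> (SubBorel (L_grp n p)) (image A_incl)"

lemma lift_push_IRS0:
  assumes "\<nu> \<in> IRS_tau n p"
  shows "lift_push \<nu> \<in> IRS0 n p"
proof -
  have sets: "sets \<nu> = sets (SubBorel (A_grp n p))" and "prob_space \<nu>"
    using assms by (auto simp: IRS_tau_def)
  have meas: "image A_incl \<in> measurable \<nu> (SubBorel (L_grp n p))"
    by (rule measurable_cong_sets_left[OF sets measurable_image_A_incl])
  have sub: "H \<subseteq> A_carrier n p" if "H \<in> space (SubBorel (A_grp n p))" for H
    using that subgroup.subset[of H "A_grp n p"] by (simp add: Sub_def A_grp_def)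
  have "distr (lift_push \<nu>) (SubBorel (L_grp n p)) (conjg (L_grp n p) g) = lift_push \<nu>"
    if g: "g \<in> carrier (L_grp n p)" for g
  proof -
    obtain a m where am: "g = (a, m)"
      by force
    show ?thesis
      unfolding lift_push_def
      using distr_shift_sub_IRS_tau[OF assms] conjg_image_A_incl[OF p g[unfolded am] sub] am
      by (intro distr_invariant_intertwine[OF sets measurable_shift_sub measurable_image_A_incl
            measurable_conjg_L[OF g]]) simp_all
  qed
  moreover have "measure (lift_push \<nu>) {V \<in> Sub (L_grp n p). V \<subseteq> A_in_L n p} = 1"
  proof -
    have "A_incl ` H \<in> {V \<in> Sub (L_grp n p). V \<subseteq> A_in_L n p}" if "H \<in> space \<nu>" for H
      using measurable_space[OF meas that] sub[of H] that sets_eq_imp_space_eq[OF sets]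
      by (auto simp: A_in_L_def A_incl_def)
    then have "image A_incl -` {V \<in> Sub (L_grp n p). V \<subseteq> A_in_L n p} \<inter> space \<nu> = space \<nu>"
      by blast
    then show ?thesis
      unfolding lift_push_def
      using measure_distr[OF meas sets_SubBorel_subgroups_within] prob_space.prob_space[OF \<open>prob_space \<nu>\<close>]
      by simp
  qed
  ultimately show ?thesis
    using prob_space.prob_space_distr[OF \<open>prob_space \<nu>\<close> meas]
    by (simp add: IRS0_def IRS_def lift_push_def)
qed

lemma lift_push_pi2_push:
  assumes "\<mu> \<in> IRS0 n p"
  shows "lift_push (pi2_push n p \<mu>) = \<mu>"
proof -
  have sets: "sets \<mu> = sets (SubBorel (L_grp n p))" and "prob_space \<mu>"
    and "measure \<mu> {V \<in> Sub (L_grp n p). V \<subseteq> A_in_L n p} = 1"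
    using assms by (auto simp: IRS0_def IRS_def)
  then have "AE V in \<mu>. V \<in> {V \<in> Sub (L_grp n p). V \<subseteq> A_in_L n p}"
    by (intro prob_space.AE_prob_1)
  then have "AE V in \<mu>. A_incl ` pi2 V = V"
    by (rule eventually_mono) (simp add: image_A_incl_pi2[of _ n p])
  then show ?thesis
    unfolding lift_push_def pi2_push_def
    by (rule distr_inverse_eq[OF sets measurable_cong_sets_left[OF sets measurable_pi2]
          measurable_image_A_incl])
qed

lemma pi2_push_lift_push:
  assumes "\<nu> \<in> IRS_tau n p"
  shows "pi2_push n p (lift_push \<nu>) = \<nu>"
proof -
  have sets: "sets \<nu> = sets (SubBorel (A_grp n p))"
    using assms by (simp add: IRS_tau_def)
  show ?thesis
    unfolding lift_push_def pi2_push_def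
    by (rule distr_inverse_eq[OF sets measurable_cong_sets_left[OF sets measurable_image_A_incl]
          measurable_pi2]) simp
qed

lemma homeomorphic_map_pi2_push:
  "homeomorphic_map (subtopology (wstar (SubTop (L_grp n p))) (IRS0 n p))
     (subtopology (wstar (SubTop (A_grp n p))) (IRS_tau n p)) (pi2_push n p)"
proof -
  have "continuous_map (subtopology (wstar (SubTop (L_grp n p))) (IRS0 n p))
     (subtopology (wstar (SubTop (A_grp n p))) (IRS_tau n p)) (pi2_push n p)"
    unfolding pi2_push_def[abs_def]
  proof (rule continuous_map_wstar_distr[OF continuous_map_pi2 measurable_pi2 borel_measurable_SubBorel])
    show "sets \<mu> = sets (SubBorel (L_grp n p))" if "\<mu> \<in> IRS0 n p" for \<mu>
      using that by (simp add: IRS0_def IRS_def)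
    show "(\<lambda>\<mu>. distr \<mu> (SubBorel (A_grp n p)) pi2) ` IRS0 n p \<subseteq> IRS_tau n p"
      using pi2_push_IRS by (auto simp: IRS0_def pi2_push_def)
  qed
  moreover have "continuous_map (subtopology (wstar (SubTop (A_grp n p))) (IRS_tau n p))
     (subtopology (wstar (SubTop (L_grp n p))) (IRS0 n p)) lift_push"
    unfolding lift_push_def[abs_def]
  proof (rule continuous_map_wstar_distr[OF continuous_map_image_A_incl measurable_image_A_incl
        borel_measurable_SubBorel])
    show "sets \<nu> = sets (SubBorel (A_grp n p))" if "\<nu> \<in> IRS_tau n p" for \<nu>
      using that by (simp add: IRS_tau_def)
    show "(\<lambda>\<nu>. distr \<nu> (SubBorel (L_grp n p)) (image A_incl)) ` IRS_tau n p \<subseteq> IRS0 n p"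
      using lift_push_IRS0 by (auto simp: lift_push_def)
  qed
  ultimately show ?thesis
    unfolding homeomorphic_map_maps homeomorphic_maps_def
    using lift_push_pi2_push pi2_push_lift_push by auto
qed

end

theorem lemma3p2:
  fixes n p :: nat
  assumes "prime p" and "n \<ge> 1"
  shows "(\<forall>\<mu> \<in> IRS (L_grp n p). pi2_push n p \<mu> \<in> IRS_tau n p)
       \<and> (\<forall>\<mu> \<in> IRS (L_grp n p). \<forall>\<nu> \<in> IRS (L_grp n p). \<forall>t \<in> {0..1::real}.
            pi2_push n p (mix t \<mu> \<nu>) = mix t (pi2_push n p \<mu>) (pi2_push n p \<nu>))
       \<and> homeomorphic_map
           (subtopology (wstar (SubTop (L_grp n p))) (IRS0 n p))
           (subtopology (wstar (SubTop (A_grp n p))) (IRS_tau n p))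
           (pi2_push n p)"
proof -
  have "p > 0"
    using assms(1) by (simp add: prime_gt_0_nat)
  then show ?thesis
    using pi2_push_IRS pi2_push_mix homeomorphic_map_pi2_push by blast
qed

end
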